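(* Let $\mathbf{C}$ be a covering of a finite nonempty set $U$. Then $\mathbf{C}$ is an invariable covering if and only if every $x\in U$ has a core block in $\mathbf{C}$ and every $K\in\mathbf{C}$ is the core block of at least one element of $U$.
   Context: A covering of $U$ is a family (set) $\mathbf{C}$ of subsets of $U$ with $\emptyset\notin\mathbf{C}$ and $\bigcup\mathbf{C}=U$; its elements are called blocks. The membership repeat degree of $x\in U$ is $\partial(x)=|\{K\in\mathbf{C}: x\in K\}|$. The common block repeat degree of $(x,y)\in U\times U$ is $\lambda(x,y)=|\{K\in\mathbf{C}: \{x,y\}\subseteq K\}|$. A block $K\in\mathbf{C}$ is a core block of $x\in U$ if $x\in K$ and $\lambda(x,y)=\partial(x)$ for every $y\in K$. A block $K\in\mathbf{C}$ is a reducible element of $\mathbf{C}$ if $K$ is the union of some subfamily of $\mathbf{C}\setminus\{K\}$; otherwise it is irreducible. $\mathbf{C}$ is irreducible if all its blocks are irreducible elements. $\mathbf{C}$ is an invariable covering if $\mathbf{C}$ is irreducible and every $x\in U$ has a core block in $\mathbf{C}$. *)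

theory Defs
  imports Main
begin

definition covering :: "'a set \<Rightarrow> 'a set set \<Rightarrow> bool" where
  "covering U C \<longleftrightarrow> {} \<notin> C \<and> \<Union>C = U"

definition mrd :: "'a set set \<Rightarrow> 'a \<Rightarrow> nat" where
  "mrd C x = card {K \<in> C. x \<in> K}"

definition cbrd :: "'a set set \<Rightarrow> 'a \<Rightarrow> 'a \<Rightarrow> nat" where
  "cbrd C x y = card {K \<in> C. {x, y} \<subseteq> K}"

definition core_block :: "'a set set \<Rightarrow> 'a \<Rightarrow> 'a set \<Rightarrow> bool" where
  "core_block C x K \<longleftrightarrow> K \<in> C \<and> x \<in> K \<and> (\<forall>y\<in>K. cbrd C x y = mrd C x)"

definition reducible_elem :: "'a set set \<Rightarrow> 'a set \<Rightarrow> bool" where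
  "reducible_elem C K \<longleftrightarrow> K \<in> C \<and> (\<exists>S. S \<subseteq> C - {K} \<and> K = \<Union>S)"

definition irreducible_covering :: "'a set set \<Rightarrow> bool" where
  "irreducible_covering C \<longleftrightarrow> (\<forall>K\<in>C. \<not> reducible_elem C K)"

definition invariable_covering :: "'a set \<Rightarrow> 'a set set \<Rightarrow> bool" where
  "invariable_covering U C \<longleftrightarrow> irreducible_covering C \<and> (\<forall>x\<in>U. \<exists>K. core_block C x K)"

end

theory Submission
  imports Defs
begin

(* For a finite family C, a block K is a core block of x exactly
   when K is the smallest block containing x: the blocks containing both x and
   y are among those containing x, so equal counts force equal families, i.e.
   every block through x also contains y.  With this characterisation:
   - a block that is the core block of one of its points cannot be a union of
     other blocks, since the block of that union through the point would have
     to contain K and be contained in K;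
   - a block K that is the core block of none of its points is the union of the
     core blocks of its points, all different from K and contained in K.
   Hence, when every point has a core block, C is irreducible iff every block
   is the core block of some point, which is the theorem, since the blocks of a
   covering of U are finite in number and contained in U. *)

lemma covering_finite_blocks:
  assumes "finite U" and "covering U C"
  shows "finite C" and "\<forall>K\<in>C. K \<subseteq> U"
proof -
  have "C \<subseteq> Pow U" using assms(2) by (auto simp: covering_def)
  then show "finite C" and "\<forall>K\<in>C. K \<subseteq> U"
    using assms(1) finite_subset by auto
qed

lemma core_block_iff_least:
  assumes "finite C"
  shows "core_block C x K \<longleftrightarrow> K \<in> C \<and> x \<in> K \<and> (\<forall>K'\<in>C. x \<in> K' \<longrightarrow> K \<subseteq> K')"
proof
  assume core: "core_block C x K"
  have "y \<in> K'" if K': "K' \<in> C" "x \<in> K'" and y: "y \<in> K" for K' y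
  proof -
    have sub: "{A \<in> C. {x, y} \<subseteq> A} \<subseteq> {A \<in> C. x \<in> A}" by auto
    have "card {A \<in> C. {x, y} \<subseteq> A} = card {A \<in> C. x \<in> A}"
      using core y by (simp add: core_block_def cbrd_def mrd_def)
    then have "{A \<in> C. {x, y} \<subseteq> A} = {A \<in> C. x \<in> A}"
      using card_subset_eq[OF _ sub] assms by auto
    then show "y \<in> K'" using K' by blast
  qed
  then show "K \<in> C \<and> x \<in> K \<and> (\<forall>K'\<in>C. x \<in> K' \<longrightarrow> K \<subseteq> K')"
    using core by (auto simp: core_block_def)
next
  assume least: "K \<in> C \<and> x \<in> K \<and> (\<forall>K'\<in>C. x \<in> K' \<longrightarrow> K \<subseteq> K')"
  then have "\<forall>y\<in>K. {A \<in> C. {x, y} \<subseteq> A} = {A \<in> C. x \<in> A}" by blast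
  then show "core_block C x K"
    using least by (simp add: core_block_def cbrd_def mrd_def)
qed

lemma core_block_not_reducible:
  assumes "finite C" and "core_block C x K"
  shows "\<not> reducible_elem C K"
proof
  assume "reducible_elem C K"
  then obtain S where S: "S \<subseteq> C - {K}" "K = \<Union>S" by (auto simp: reducible_elem_def)
  have "x \<in> K" using assms(2) by (simp add: core_block_def)
  then obtain K' where K': "K' \<in> S" "x \<in> K'" using S by blast
  moreover have "K' \<in> C" using K' S by blast
  ultimately have "K \<subseteq> K'" using assms core_block_iff_least by metis
  moreover have "K' \<subseteq> K" using K' S by auto
  ultimately show False using K' S by auto
qed

text \<open>If every point of a block K has a core block but K is the core block of
  none of them, then K is the union of those core blocks, hence reducible.\<close>
lemma reducible_if_not_core_block:
  assumes "finite C" and "K \<in> C"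
    and has_core: "\<forall>x\<in>K. \<exists>K'. core_block C x K'"
    and not_core: "\<forall>x\<in>K. \<not> core_block C x K"
  shows "reducible_elem C K"
proof -
  obtain f where f: "\<forall>x\<in>K. core_block C x (f x)" using has_core by metis
  have core_sub: "f x \<subseteq> K" if "x \<in> K" for x
    using f that assms(2) core_block_iff_least[OF assms(1)] by metis
  have "f x \<in> C - {K}" if "x \<in> K" for x
    using f not_core that by (metis DiffI core_block_def singletonD)
  then have "f ` K \<subseteq> C - {K}" by blast
  moreover have "K = \<Union>(f ` K)"
    using f core_sub by (auto simp: core_block_def)
  ultimately show ?thesis using assms(2) by (auto simp: reducible_elem_def)
qed

lemma irreducible_iff_blocks_core:
  assumes "finite C" and has_core: "\<forall>x\<in>\<Union>C. \<exists>K. core_block C x K"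
  shows "irreducible_covering C \<longleftrightarrow> (\<forall>K\<in>C. \<exists>x\<in>K. core_block C x K)"
proof
  assume "irreducible_covering C"
  then show "\<forall>K\<in>C. \<exists>x\<in>K. core_block C x K"
    using reducible_if_not_core_block[OF assms(1)] has_core
    by (fastforce simp: irreducible_covering_def)
next
  assume "\<forall>K\<in>C. \<exists>x\<in>K. core_block C x K"
  then show "irreducible_covering C"
    using core_block_not_reducible[OF assms(1)] by (auto simp: irreducible_covering_def)
qed

theorem proposition22:
  fixes U :: "'a set" and C :: "'a set set"
  assumes "finite U" and "U \<noteq> {}" and "covering U C"
  shows "invariable_covering U C \<longleftrightarrow>
    ((\<forall>x\<in>U. \<exists>K. core_block C x K) \<and> (\<forall>K\<in>C. \<exists>x\<in>U. core_block C x K))"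
proof -
  have fin: "finite C" and blocks: "\<forall>K\<in>C. K \<subseteq> U"
    using covering_finite_blocks[OF assms(1,3)] by auto
  have union: "\<Union>C = U" using assms(3) by (simp add: covering_def)
  have point_in_block: "(\<exists>x\<in>K. core_block C x K) \<longleftrightarrow> (\<exists>x\<in>U. core_block C x K)"
    if "K \<in> C" for K
    using that blocks by (auto simp: core_block_def)
  have "irreducible_covering C \<longleftrightarrow> (\<forall>K\<in>C. \<exists>x\<in>U. core_block C x K)"
    if "\<forall>x\<in>U. \<exists>K. core_block C x K"
    using irreducible_iff_blocks_core[OF fin] that point_in_block union by simp
  then show ?thesis
    unfolding invariable_covering_def by blast
qed

end
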